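(* Let $V^*=V\cup V^{\mathrm{abs}}$ be a finite set and $\{\eta(t),t\ge0\}$ a consistent configuration process on $V^*$ with generator $\mathcal L^{\mathrm{abs}}=\mathcal L+\mathcal H$. Let $\mathbf x=(x_1,\dots,x_n)\in(V^* )^n$. Then for all $v\in V^{\mathrm{abs}}$, $$\mathbb E_{\phi(\mathbf x)}[\eta_v(\infty)]=\sum_{j=1}^n\mathbf P_{x_j}\big(X^{\mathrm{rw}}(\infty)=v\big),$$ where $\mathbf P_u$ is the law of the random walk $X^{\mathrm{rw}}$ on $V^*$ associated to $\{\eta(t)\}$, started at $u$.
   Context: $V^{\mathrm{abs}}=V^*\setminus V$, rates $r(i,j)\ge0$ for $i\in V$, $j\in V^{\mathrm{abs}}$. $\mathcal L$ generates a configuration process on $V$ (single-site space $\Lambda\subseteq\mathbb N_0$), acting only on $(\eta_i)_{i\in V}$; $\mathcal Hf(\eta)=\sum_{i\in V,j\in V^{\mathrm{abs}}}r(i,j)\eta_i[f(\eta-\delta_i+\delta_j)-f(\eta)]$. Consistency: $[\mathcal L^{\mathrm{abs}},\mathcal A]=0$, $\mathcal Af(\eta)=\sum_{x\in V^*}\eta_xf(\eta-\delta_x)$. $\phi(\mathbf y)=\sum_i\delta_{y_i}$. The associated random walk is defined by: if $\eta(0)=\delta_u$ then $\eta(t)=\delta_{X^{\mathrm{rw}}(t)}$, $X^{\mathrm{rw}}(0)=u$. Quantities at time $\infty$ are limits as $t\to\infty$ of the corresponding quantities at time $t$. *)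

theory Defs
  imports Complex_Main
begin

type_synonym 'a cfg = "'a \<Rightarrow> nat"

definition restr :: "'a set \<Rightarrow> 'a cfg \<Rightarrow> 'a cfg" where
  "restr V \<eta> = (\<lambda>i. if i \<in> V then \<eta> i else 0)"

definition dlt :: "'a \<Rightarrow> 'a cfg" where
  "dlt u = (\<lambda>i. if i = u then 1 else 0)"

definition phi :: "'a list \<Rightarrow> 'a cfg" where
  "phi xs = (\<lambda>i. length (filter (\<lambda>y. y = i) xs))"

text \<open>Configurations on Vs (zero outside Vs) with single-site values in Lambda on V;
  absorbing sites (Vs - V) may hold any number of particles.\<close>
definition ConfSpace :: "'a set \<Rightarrow> 'a set \<Rightarrow> nat set \<Rightarrow> 'a cfg set" where
  "ConfSpace Vs V \<Lambda> = {\<eta>. (\<forall>i. i \<notin> Vs \<longrightarrow> \<eta> i = 0) \<and> (\<forall>i\<in>V. \<eta> i \<in> \<Lambda>)}"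

definition sector :: "'a set \<Rightarrow> 'a set \<Rightarrow> nat set \<Rightarrow> nat \<Rightarrow> 'a cfg set" where
  "sector Vs V \<Lambda> k = {\<eta> \<in> ConfSpace Vs V \<Lambda>. (\<Sum>i\<in>Vs. \<eta> i) = k}"

definition rateL :: "'a set \<Rightarrow> ('a cfg \<Rightarrow> 'a cfg \<Rightarrow> real) \<Rightarrow> 'a cfg \<Rightarrow> 'a cfg \<Rightarrow> real" where
  "rateL V c \<eta> \<xi> = (if (\<forall>i. i \<notin> V \<longrightarrow> \<xi> i = \<eta> i) then c (restr V \<eta>) (restr V \<xi>) else 0)"

definition rateH :: "'a set \<Rightarrow> 'a set \<Rightarrow> ('a \<Rightarrow> 'a \<Rightarrow> real) \<Rightarrow> 'a cfg \<Rightarrow> 'a cfg \<Rightarrow> real" where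
  "rateH Vs V r \<eta> \<xi> =
     (\<Sum>i\<in>V. \<Sum>j\<in>Vs - V. if \<xi> = (\<lambda>k. \<eta> k - dlt i k + dlt j k) then r i j * real (\<eta> i) else 0)"

definition rateAbs :: "'a set \<Rightarrow> 'a set \<Rightarrow> ('a cfg \<Rightarrow> 'a cfg \<Rightarrow> real) \<Rightarrow> ('a \<Rightarrow> 'a \<Rightarrow> real)
    \<Rightarrow> 'a cfg \<Rightarrow> 'a cfg \<Rightarrow> real" where
  "rateAbs Vs V c r \<eta> \<xi> = rateL V c \<eta> \<xi> + rateH Vs V r \<eta> \<xi>"

definition genAbs :: "'a set \<Rightarrow> 'a set \<Rightarrow> nat set \<Rightarrow> ('a cfg \<Rightarrow> 'a cfg \<Rightarrow> real)
    \<Rightarrow> ('a \<Rightarrow> 'a \<Rightarrow> real) \<Rightarrow> ('a cfg \<Rightarrow> real) \<Rightarrow> 'a cfg \<Rightarrow> real" where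
  "genAbs Vs V \<Lambda> c r f \<eta> =
     (\<Sum>\<xi>\<in>sector Vs V \<Lambda> (\<Sum>i\<in>Vs. \<eta> i). rateAbs Vs V c r \<eta> \<xi> * (f \<xi> - f \<eta>))"

definition Aop :: "'a set \<Rightarrow> ('a cfg \<Rightarrow> real) \<Rightarrow> 'a cfg \<Rightarrow> real" where
  "Aop Vs f \<eta> = (\<Sum>x\<in>Vs. real (\<eta> x) * f (\<lambda>k. \<eta> k - dlt x k))"

definition genMat :: "'a set \<Rightarrow> 'a set \<Rightarrow> ('a cfg \<Rightarrow> 'a cfg \<Rightarrow> real) \<Rightarrow> ('a \<Rightarrow> 'a \<Rightarrow> real)
    \<Rightarrow> 'a cfg set \<Rightarrow> 'a cfg \<Rightarrow> 'a cfg \<Rightarrow> real" where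
  "genMat Vs V c r S \<eta> \<xi> =
     (if \<eta> = \<xi> then - (\<Sum>\<zeta>\<in>S - {\<eta>}. rateAbs Vs V c r \<eta> \<zeta>) else rateAbs Vs V c r \<eta> \<xi>)"

fun mpow :: "'s set \<Rightarrow> ('s \<Rightarrow> 's \<Rightarrow> real) \<Rightarrow> nat \<Rightarrow> 's \<Rightarrow> 's \<Rightarrow> real" where
  "mpow S M 0 x y = (if x = y then 1 else 0)"
| "mpow S M (Suc k) x y = (\<Sum>z\<in>S. M x z * mpow S M k z y)"

definition expM :: "'s set \<Rightarrow> ('s \<Rightarrow> 's \<Rightarrow> real) \<Rightarrow> real \<Rightarrow> 's \<Rightarrow> 's \<Rightarrow> real" where
  "expM S M t x y = (\<Sum>k. t ^ k / fact k * mpow S M k x y)"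

text \<open>Transition probabilities P_eta(eta(t) = xi) of the configuration process with generator
  L^abs; the process conserves the particle number, so it lives on the finite sector of eta.\<close>
definition trans :: "'a set \<Rightarrow> 'a set \<Rightarrow> nat set \<Rightarrow> ('a cfg \<Rightarrow> 'a cfg \<Rightarrow> real) \<Rightarrow> ('a \<Rightarrow> 'a \<Rightarrow> real)
    \<Rightarrow> real \<Rightarrow> 'a cfg \<Rightarrow> 'a cfg \<Rightarrow> real" where
  "trans Vs V \<Lambda> c r t \<eta> \<xi> =
     (let S = sector Vs V \<Lambda> (\<Sum>i\<in>Vs. \<eta> i) in expM S (genMat Vs V c r S) t \<eta> \<xi>)"

definition expect :: "'a set \<Rightarrow> 'a set \<Rightarrow> nat set \<Rightarrow> ('a cfg \<Rightarrow> 'a cfg \<Rightarrow> real) \<Rightarrow> ('a \<Rightarrow> 'a \<Rightarrow> real)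
    \<Rightarrow> real \<Rightarrow> 'a cfg \<Rightarrow> ('a cfg \<Rightarrow> real) \<Rightarrow> real" where
  "expect Vs V \<Lambda> c r t \<eta> f =
     (\<Sum>\<xi>\<in>sector Vs V \<Lambda> (\<Sum>i\<in>Vs. \<eta> i). trans Vs V \<Lambda> c r t \<eta> \<xi> * f \<xi>)"

text \<open>Associated random walk: P_u(X(t) = w) = P_{delta_u}(eta(t) = delta_w).\<close>
definition rwProb :: "'a set \<Rightarrow> 'a set \<Rightarrow> nat set \<Rightarrow> ('a cfg \<Rightarrow> 'a cfg \<Rightarrow> real) \<Rightarrow> ('a \<Rightarrow> 'a \<Rightarrow> real)
    \<Rightarrow> real \<Rightarrow> 'a \<Rightarrow> 'a \<Rightarrow> real" where
  "rwProb Vs V \<Lambda> c r t u w = trans Vs V \<Lambda> c r t (dlt u) (dlt w)"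

end

theory Submission
  imports Defs
begin

(*
  Consistency [L^abs, A] = 0 passes from the generator to its powers and hence to the
  semigroup: E_eta[(A f)(eta(t))] = A (E_.[f(eta(t))]) (eta). For n = m + 1 particles, A^m
  applied to the indicator of delta_v gives m! eta_v, while A^m applied to
  zeta |-> P_zeta(eta(t) = delta_v) at phi(x) gives m! sum_j P_{x_j}(X(t) = v). Hence
  E_phi(x)[eta_v(t)] = sum_j P_{x_j}(X(t) = v) for every t. A single particle at an
  absorbing site v stays there, so t |-> P_u(X(t) = v) is nondecreasing (its derivative is
  sum_z P_u(X(t) = z) Q(z, v) >= 0, the transition probabilities being nonnegative by
  uniformization) and bounded by 1; it converges, and the identity passes to the limit.
*)

section \<open>Matrix exponentials on a finite state space\<close>

lemma mpow_abs_le: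
  assumes "finite S" and "x \<in> S"
  shows "\<bar>mpow S M k x y\<bar> \<le> (\<Sum>a\<in>S. \<Sum>b\<in>S. \<bar>M a b\<bar>) ^ k"
  using assms(2)
proof (induction k arbitrary: x)
  case 0
  then show ?case by simp
next
  case (Suc k)
  let ?K = "\<Sum>a\<in>S. \<Sum>b\<in>S. \<bar>M a b\<bar>"
  have row: "(\<Sum>z\<in>S. \<bar>M x z\<bar>) \<le> ?K"
    using member_le_sum[of x S "\<lambda>a. \<Sum>b\<in>S. \<bar>M a b\<bar>"] Suc.prems assms(1)
    by (simp add: sum_nonneg)
  have "\<bar>mpow S M (Suc k) x y\<bar> \<le> (\<Sum>z\<in>S. \<bar>M x z\<bar> * \<bar>mpow S M k z y\<bar>)"
    by (simp add: abs_mult sum_abs[THEN order_trans])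
  also have "\<dots> \<le> (\<Sum>z\<in>S. \<bar>M x z\<bar>) * ?K ^ k"
    unfolding sum_distrib_right by (intro sum_mono mult_left_mono Suc.IH) auto
  also have "\<dots> \<le> ?K * ?K ^ k"
    using row by (intro mult_right_mono) (auto simp: sum_nonneg)
  finally show ?case by simp
qed

lemma summable_abs_expM_series:
  assumes "finite S" and "x \<in> S"
  shows "summable (\<lambda>k. \<bar>t ^ k / fact k * mpow S M k x y\<bar>)"
proof (rule summable_comparison_test[OF _ summable_exp[of "\<bar>t\<bar> * (\<Sum>a\<in>S. \<Sum>b\<in>S. \<bar>M a b\<bar>)"]],
    intro exI allI impI)
  fix k :: nat
  let ?K = "\<Sum>a\<in>S. \<Sum>b\<in>S. \<bar>M a b\<bar>"
  have "\<bar>t ^ k / fact k * mpow S M k x y\<bar> = \<bar>t\<bar> ^ k / fact k * \<bar>mpow S M k x y\<bar>"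
    by (simp add: abs_mult power_abs)
  also have "\<dots> \<le> \<bar>t\<bar> ^ k / fact k * ?K ^ k"
    by (intro mult_left_mono mpow_abs_le assms) auto
  finally show "norm \<bar>t ^ k / fact k * mpow S M k x y\<bar> \<le> inverse (fact k) * (\<bar>t\<bar> * ?K) ^ k"
    by (simp add: power_mult_distrib divide_inverse mult_ac)
qed

lemma summable_expM_series:
  assumes "finite S" and "x \<in> S"
  shows "summable (\<lambda>k. t ^ k / fact k * mpow S M k x y)"
  using summable_abs_expM_series[OF assms] by (rule summable_rabs_cancel)

lemma mpow_Suc_right:
  assumes "finite S" and "x \<in> S" and "y \<in> S"
  shows "mpow S M (Suc k) x y = (\<Sum>z\<in>S. mpow S M k x z * M z y)"
  using assms(2)
proof (induction k arbitrary: x)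
  case 0
  have "(\<Sum>z\<in>S. mpow S M 0 x z * M z y) = (\<Sum>z\<in>S. if z = x then M x y else 0)"
    by (rule sum.cong) auto
  also have "\<dots> = (\<Sum>z\<in>S. if z = y then M x z else 0)"
    using assms(1,3) 0 by simp
  also have "\<dots> = mpow S M 1 x y"
    by simp (rule sum.cong; simp)
  finally show ?case by simp
next
  case (Suc k)
  have "mpow S M (Suc (Suc k)) x y = (\<Sum>w\<in>S. M x w * (\<Sum>z\<in>S. mpow S M k w z * M z y))"
    using Suc.IH by (simp cong: sum.cong)
  also have "\<dots> = (\<Sum>z\<in>S. (\<Sum>w\<in>S. M x w * mpow S M k w z) * M z y)"
    unfolding sum_distrib_left sum_distrib_right mult.assoc by (rule sum.swap)
  finally show ?case by simp
qed

lemma sum_mpow_row: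
  assumes "finite S" and "x \<in> S" and "\<forall>a\<in>S. (\<Sum>b\<in>S. M a b) = 0"
  shows "(\<Sum>z\<in>S. mpow S M k x z) = (if k = 0 then 1 else 0)"
  using assms(2)
proof (induction k arbitrary: x)
  case 0
  then show ?case using assms(1) by simp
next
  case (Suc k)
  have "(\<Sum>z\<in>S. mpow S M (Suc k) x z) = (\<Sum>w\<in>S. M x w * (\<Sum>z\<in>S. mpow S M k w z))"
    unfolding sum_distrib_left by (simp add: sum.swap[of "\<lambda>z w. M x w * mpow S M k w z"])
  also have "\<dots> = (\<Sum>w\<in>S. M x w) * (if k = 0 then 1 else 0)"
    using Suc.IH by (simp add: sum_distrib_right)
  finally show ?case using assms(3) Suc.prems by simp
qed

lemma binomial_sum_Suc:
  fixes b :: "nat \<Rightarrow> real"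
  shows "(\<Sum>j\<le>Suc n. of_nat (Suc n choose j) * d ^ (Suc n - j) * b j)
       = (\<Sum>j\<le>n. of_nat (n choose j) * d ^ (n - j) * b (Suc j))
         + d * (\<Sum>j\<le>n. of_nat (n choose j) * d ^ (n - j) * b j)"
proof -
  have "d * (\<Sum>j\<le>n. of_nat (n choose j) * d ^ (n - j) * b j)
      = (\<Sum>j\<le>n. of_nat (n choose j) * d ^ (Suc n - j) * b j)"
    unfolding sum_distrib_left by (rule sum.cong) (auto simp: Suc_diff_le)
  also have "\<dots> = (\<Sum>j\<le>Suc n. of_nat (n choose j) * d ^ (Suc n - j) * b j)"
    by simp
  also have "\<dots> = d ^ Suc n * b 0 + (\<Sum>j\<le>n. of_nat (n choose Suc j) * d ^ (n - j) * b (Suc j))"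
    by (subst sum.atMost_Suc_shift) simp
  finally show ?thesis
    by (subst sum.atMost_Suc_shift) (simp add: ring_distribs sum.distrib)
qed

lemma mpow_add_diagonal:
  assumes "finite S" and "x \<in> S"
  shows "mpow S (\<lambda>a b. M a b + (if a = b then d else 0)) n x y
       = (\<Sum>j\<le>n. of_nat (n choose j) * d ^ (n - j) * mpow S M j x y)"
  using assms(2)
proof (induction n arbitrary: x)
  case 0
  then show ?case by simp
next
  case (Suc n)
  let ?B = "\<lambda>a b. M a b + (if a = b then d else 0)"
  have "mpow S ?B (Suc n) x y
      = (\<Sum>z\<in>S. M x z * mpow S ?B n z y + (if z = x then d * mpow S ?B n x y else 0))"
    by (simp only: mpow.simps) (rule sum.cong; auto simp: distrib_right)
  also have "\<dots> = (\<Sum>z\<in>S. M x z * mpow S ?B n z y) + d * mpow S ?B n x y"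
    using assms(1) Suc.prems by (simp add: sum.distrib)
  also have "(\<Sum>z\<in>S. M x z * mpow S ?B n z y)
      = (\<Sum>z\<in>S. M x z * (\<Sum>j\<le>n. of_nat (n choose j) * d ^ (n - j) * mpow S M j z y))"
    using Suc.IH by (intro sum.cong) auto
  also have "\<dots> = (\<Sum>j\<le>n. of_nat (n choose j) * d ^ (n - j) * mpow S M (Suc j) x y)"
    by (simp add: sum_distrib_left sum_distrib_right sum.swap[of _ S] mult_ac)
  also note Suc.IH[OF Suc.prems]
  finally show ?case
    by (simp only: binomial_sum_Suc)
qed

lemma expM_add_diagonal:
  assumes "finite S" and "x \<in> S"
  shows "expM S (\<lambda>a b. M a b + (if a = b then d else 0)) t x y = exp (d * t) * expM S M t x y"
proof -
  define a where "a = (\<lambda>k. t ^ k / fact k * mpow S M k x y)"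
  define e where "e = (\<lambda>k. (d * t) ^ k / fact k)"
  have "exp (d * t) * expM S M t x y = (\<Sum>k. a k) * (\<Sum>k. e k)"
    using exp_converges[of "d * t"]
    by (simp add: expM_def a_def e_def sums_iff divide_inverse mult.commute)
  also have "\<dots> = (\<Sum>k. \<Sum>i\<le>k. a i * e (k - i))"
  proof (rule Cauchy_product)
    show "summable (\<lambda>k. norm (a k))"
      unfolding a_def real_norm_def by (rule summable_abs_expM_series[OF assms])
    show "summable (\<lambda>k. norm (e k))"
      using summable_norm_exp[of "d * t"] by (simp add: e_def divide_inverse mult.commute)
  qed
  also have "\<dots> = (\<Sum>k. t ^ k / fact k * mpow S (\<lambda>a b. M a b + (if a = b then d else 0)) k x y)"
  proof (rule suminf_cong)
    fix k
    have "a j * e (k - j) = t ^ k / fact k * (of_nat (k choose j) * d ^ (k - j) * mpow S M j x y)"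
      if "j \<le> k" for j
    proof -
      have "t ^ k = t ^ j * t ^ (k - j)"
        using that by (simp flip: power_add)
      then show ?thesis
        unfolding a_def e_def binomial_fact[OF that] power_mult_distrib by (simp add: field_simps)
    qed
    then show "(\<Sum>i\<le>k. a i * e (k - i))
        = t ^ k / fact k * mpow S (\<lambda>a b. M a b + (if a = b then d else 0)) k x y"
      unfolding mpow_add_diagonal[OF assms] sum_distrib_left by (intro sum.cong) auto
  qed
  finally show ?thesis
    by (simp add: expM_def)
qed

lemma expM_nonneg:
  assumes "finite S" and "x \<in> S" and "t \<ge> 0"
    and off_diag: "\<forall>a\<in>S. \<forall>b\<in>S. a \<noteq> b \<longrightarrow> Q a b \<ge> 0"
  shows "expM S Q t x y \<ge> 0"
proof -
  define d where "d = (\<Sum>a\<in>S. \<bar>Q a a\<bar>)"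
  define B where "B = (\<lambda>a b. Q a b + (if a = b then d else 0))"
  have B_nonneg: "B a b \<ge> 0" if "a \<in> S" "b \<in> S" for a b
  proof (cases "a = b")
    case True
    have "\<bar>Q a a\<bar> \<le> d"
      unfolding d_def using member_le_sum[of a S "\<lambda>a. \<bar>Q a a\<bar>"] that assms(1) by simp
    then show ?thesis using True by (simp add: B_def)
  next
    case False
    then show ?thesis using off_diag that by (simp add: B_def)
  qed
  have mpow_B_nonneg: "mpow S B k a b \<ge> 0" if "a \<in> S" for k a b
    using that by (induction k arbitrary: a) (simp_all add: sum_nonneg B_nonneg)
  have "expM S B t x y \<ge> 0"
    unfolding expM_def using assms(2,3)
    by (intro suminf_nonneg summable_expM_series[OF assms(1,2)] mult_nonneg_nonneg mpow_B_nonneg) auto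
  moreover have "(\<lambda>a b. B a b + (if a = b then - d else 0)) = Q"
    by (simp add: B_def fun_eq_iff)
  then have "expM S Q t x y = exp (- d * t) * expM S B t x y"
    using expM_add_diagonal[OF assms(1,2), of B "- d" t y] by simp
  ultimately show ?thesis by simp
qed

lemma sum_expM_row:
  assumes "finite S" and "x \<in> S" and "\<forall>a\<in>S. (\<Sum>b\<in>S. Q a b) = 0"
  shows "(\<Sum>z\<in>S. expM S Q t x z) = 1"
proof -
  have "(\<Sum>z\<in>S. expM S Q t x z) = (\<Sum>k. t ^ k / fact k * (\<Sum>z\<in>S. mpow S Q k x z))"
    unfolding expM_def sum_distrib_left
    by (rule suminf_sum[symmetric]) (rule summable_expM_series[OF assms(1,2)])
  also have "\<dots> = (\<Sum>k. if k = 0 then 1 else 0)"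
    by (rule suminf_cong) (simp add: sum_mpow_row[OF assms])
  also have "\<dots> = 1"
    using sums_single[of 0 "\<lambda>_. 1::real"] by (simp add: sums_iff)
  finally show ?thesis .
qed

lemma expM_le_1:
  assumes "finite S" and "x \<in> S" and "y \<in> S" and "t \<ge> 0"
    and "\<forall>a\<in>S. \<forall>b\<in>S. a \<noteq> b \<longrightarrow> Q a b \<ge> 0"
    and "\<forall>a\<in>S. (\<Sum>b\<in>S. Q a b) = 0"
  shows "expM S Q t x y \<le> 1"
proof -
  have "expM S Q t x y \<le> (\<Sum>z\<in>S. expM S Q t x z)"
    using assms(1-5) by (intro member_le_sum expM_nonneg) auto
  then show ?thesis
    using sum_expM_row[OF assms(1,2,6)] by simp
qed

lemma expM_has_real_derivative:
  assumes "finite S" and "x \<in> S" and "y \<in> S"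
  shows "((\<lambda>t. expM S Q t x y) has_real_derivative (\<Sum>z\<in>S. expM S Q t x z * Q z y)) (at t)"
proof -
  define a where "a = (\<lambda>k. mpow S Q k x y / fact k)"
  have series: "(\<lambda>t. expM S Q t x y) = (\<lambda>t. \<Sum>k. a k * t ^ k)"
    by (simp add: expM_def a_def field_simps)
  have summable: "summable (\<lambda>k. a k * s ^ k)" for s
    using summable_expM_series[OF assms(1,2), of s Q y] by (simp add: a_def field_simps)
  have "diffs a k * t ^ k = (\<Sum>z\<in>S. t ^ k / fact k * mpow S Q k x z * Q z y)" for k
  proof -
    have diffs: "diffs a k = mpow S Q (Suc k) x y / fact k"
      by (simp add: diffs_def a_def del: of_nat_Suc mpow.simps)
    show ?thesis
      unfolding diffs mpow_Suc_right[OF assms] by (simp add: sum_distrib_left sum_divide_distrib mult_ac)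
  qed
  then have "(\<Sum>k. diffs a k * t ^ k) = (\<Sum>k. \<Sum>z\<in>S. t ^ k / fact k * mpow S Q k x z * Q z y)"
    by simp
  also have "\<dots> = (\<Sum>z\<in>S. \<Sum>k. t ^ k / fact k * mpow S Q k x z * Q z y)"
    by (rule suminf_sum) (intro summable_mult2 summable_expM_series[OF assms(1,2)])
  also have "\<dots> = (\<Sum>z\<in>S. expM S Q t x z * Q z y)"
    unfolding expM_def
    by (intro sum.cong refl suminf_mult2[OF summable_expM_series[OF assms(1,2)], symmetric])
  finally show ?thesis
    unfolding series by (metis termdiffs_strong_converges_everywhere[OF summable])
qed

lemma mono_bounded_tendsto_at_top:
  fixes f :: "real \<Rightarrow> real"
  assumes mono: "\<And>s u. 0 \<le> s \<Longrightarrow> s \<le> u \<Longrightarrow> f s \<le> f u"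
    and bounded: "\<And>s. 0 \<le> s \<Longrightarrow> f s \<le> B"
  shows "(f \<longlongrightarrow> Sup (f ` {0..})) at_top"
proof (rule increasing_tendsto)
  have bdd: "bdd_above (f ` {0..})"
    using bounded by (auto intro!: bdd_aboveI)
  then show "\<forall>\<^sub>F s in at_top. f s \<le> Sup (f ` {0..})"
    unfolding eventually_at_top_linorder by (auto intro!: exI[of _ 0] cSup_upper)
  fix a assume "a < Sup (f ` {0..})"
  then obtain s where s: "s \<ge> 0" "a < f s"
    using less_cSupE[of a "f ` {0..}"] by auto
  have "a < f u" if "u \<ge> s" for u
    using s mono[OF s(1) that] by linarith
  then show "\<forall>\<^sub>F u in at_top. a < f u"
    unfolding eventually_at_top_linorder by blast
qed

lemma expM_absorbing_convergent:
  assumes "finite S" and "x \<in> S" and "y \<in> S"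
    and off_diag: "\<forall>a\<in>S. \<forall>b\<in>S. a \<noteq> b \<longrightarrow> Q a b \<ge> 0"
    and rows: "\<forall>a\<in>S. (\<Sum>b\<in>S. Q a b) = 0"
    and absorbing: "\<forall>b\<in>S. Q y b = 0"
  shows "\<exists>L. ((\<lambda>t. expM S Q t x y) \<longlongrightarrow> L) at_top"
proof -
  have "expM S Q s x y \<le> expM S Q u x y" if "0 \<le> s" "s \<le> u" for s u
  proof (rule DERIV_nonneg_imp_nondecreasing[OF that(2)])
    fix w assume "s \<le> w" "w \<le> u"
    have "expM S Q w x z * Q z y \<ge> 0" if "z \<in> S" for z
      using off_diag absorbing expM_nonneg[OF assms(1,2), of w Q z] \<open>0 \<le> s\<close> \<open>s \<le> w\<close> that assms(3)
      by (cases "z = y") auto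
    then have "(\<Sum>z\<in>S. expM S Q w x z * Q z y) \<ge> 0"
      by (rule sum_nonneg)
    then show "\<exists>d. ((\<lambda>t. expM S Q t x y) has_real_derivative d) (at w) \<and> 0 \<le> d"
      using expM_has_real_derivative[OF assms(1-3)] by blast
  qed
  moreover have "expM S Q s x y \<le> 1" if "0 \<le> s" for s
    using expM_le_1[OF assms(1-3) that off_diag rows] .
  ultimately show ?thesis
    using mono_bounded_tendsto_at_top[of "\<lambda>t. expM S Q t x y"] by blast
qed


section \<open>Configurations and the annihilation operator\<close>

lemma finite_sector:
  assumes "finite Vs"
  shows "finite (sector Vs V \<Lambda> k)"
proof (rule finite_subset)
  show "finite {f. \<forall>x. (x \<in> Vs \<longrightarrow> f x \<in> {0..k}) \<and> (x \<notin> Vs \<longrightarrow> f x = (0::nat))}"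
    by (rule finite_set_of_finite_funs) (auto simp: assms)
  have "f x \<le> k" if "f \<in> sector Vs V \<Lambda> k" "x \<in> Vs" for f x
    using that member_le_sum[of x Vs f] assms by (simp add: sector_def)
  then show "sector Vs V \<Lambda> k
      \<subseteq> {f. \<forall>x. (x \<in> Vs \<longrightarrow> f x \<in> {0..k}) \<and> (x \<notin> Vs \<longrightarrow> f x = 0)}"
    by (auto simp: sector_def ConfSpace_def)
qed

lemma genMat_row_sum:
  assumes "finite S" and "a \<in> S"
  shows "(\<Sum>b\<in>S. genMat Vs V c r S a b) = 0"
proof -
  have "(\<Sum>b\<in>S - {a}. genMat Vs V c r S a b) = (\<Sum>b\<in>S - {a}. rateAbs Vs V c r a b)"
    by (rule sum.cong) (auto simp: genMat_def)
  then show ?thesis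
    using assms by (simp add: sum.remove genMat_def)
qed

lemma dlt_eq_iff: "dlt u = dlt w \<longleftrightarrow> u = w"
  by (metis dlt_def one_neq_zero)

lemma sum_dlt: "finite Vs \<Longrightarrow> u \<in> Vs \<Longrightarrow> (\<Sum>i\<in>Vs. dlt u i) = 1"
  by (simp add: dlt_def)

lemma single_particle_eq_dlt:
  assumes "finite Vs" and "\<forall>i. i \<notin> Vs \<longrightarrow> \<eta> i = 0" and "(\<Sum>i\<in>Vs. \<eta> i) = 1"
  obtains w where "w \<in> Vs" and "\<eta> = dlt w"
proof -
  obtain w where w: "w \<in> Vs" "\<eta> w \<noteq> 0"
    using assms(3) by (metis sum.neutral zero_neq_one)
  have "\<eta> w + (\<Sum>i\<in>Vs - {w}. \<eta> i) = 1"
    using assms(1,3) w(1) by (simp add: sum.remove)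
  then have "\<eta> w = 1" and "(\<Sum>i\<in>Vs - {w}. \<eta> i) = 0"
    using w(2) by auto
  then have "\<eta> = dlt w"
    using assms(1,2) by (auto simp: dlt_def fun_eq_iff)
  with w(1) show thesis by (rule that)
qed

lemma Aop_cong:
  assumes "\<And>x. x \<in> Vs \<Longrightarrow> 0 < \<eta> x \<Longrightarrow> g (\<lambda>k. \<eta> k - dlt x k) = g' (\<lambda>k. \<eta> k - dlt x k)"
  shows "Aop Vs g \<eta> = Aop Vs g' \<eta>"
  unfolding Aop_def using assms by (intro sum.cong refl) (metis mult_zero_left of_nat_0 neq0_conv)

(* Labelling the m + 1 particles, A^m removes all but one of them in each of the m! orders. *)

lemma Aop_pow_eq:
  assumes "finite Vs" and "\<forall>i. i \<notin> Vs \<longrightarrow> \<eta> i = 0" and "(\<Sum>i\<in>Vs. \<eta> i) = Suc m"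
  shows "(Aop Vs ^^ m) h \<eta> = fact m * (\<Sum>u\<in>Vs. real (\<eta> u) * h (dlt u))"
  using assms(2,3)
proof (induction m arbitrary: \<eta>)
  case 0
  then obtain w where w: "w \<in> Vs" "\<eta> = dlt w"
    using single_particle_eq_dlt[OF assms(1)] by auto
  have "(\<Sum>u\<in>Vs. real (\<eta> u) * h (dlt u)) = (\<Sum>u\<in>Vs. if u = w then h (dlt w) else 0)"
    unfolding w(2) by (rule sum.cong) (auto simp: dlt_def)
  then show ?case
    using w assms(1) by simp
next
  case (Suc m)
  define T where "T = (\<Sum>u\<in>Vs. real (\<eta> u) * h (dlt u))"
  have removed: "(Aop Vs ^^ m) h (\<lambda>k. \<eta> k - dlt x k) = fact m * (T - h (dlt x))"
    if x: "x \<in> Vs" "0 < \<eta> x" for x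
  proof -
    have "(\<Sum>i\<in>Vs. \<eta> i - dlt x i) + (\<Sum>i\<in>Vs. dlt x i) = (\<Sum>i\<in>Vs. \<eta> i)"
      using x(2) by (simp add: sum.distrib[symmetric] dlt_def)
    then have "(\<Sum>i\<in>Vs. \<eta> i - dlt x i) = Suc m"
      using Suc.prems sum_dlt[OF assms(1) x(1)] by simp
    moreover have "\<forall>i. i \<notin> Vs \<longrightarrow> \<eta> i - dlt x i = 0"
      using Suc.prems by simp
    moreover have "(\<Sum>u\<in>Vs. real (\<eta> u - dlt x u) * h (dlt u))
        = (\<Sum>u\<in>Vs. real (\<eta> u) * h (dlt u) - (if u = x then h (dlt x) else 0))"
      using x(2) by (intro sum.cong refl) (auto simp: of_nat_diff dlt_def left_diff_distrib)
    ultimately show ?thesis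
      using Suc.IH assms(1) x(1) by (simp add: sum_subtractf T_def)
  qed
  have "(Aop Vs ^^ Suc m) h \<eta> = Aop Vs ((Aop Vs ^^ m) h) \<eta>"
    by simp
  also have "\<dots> = (\<Sum>x\<in>Vs. real (\<eta> x) * (fact m * (T - h (dlt x))))"
    unfolding Aop_def[of Vs "(Aop Vs ^^ m) h"]
  proof (intro sum.cong refl)
    fix x assume "x \<in> Vs"
    then show "real (\<eta> x) * (Aop Vs ^^ m) h (\<lambda>k. \<eta> k - dlt x k)
        = real (\<eta> x) * (fact m * (T - h (dlt x)))"
      by (cases "\<eta> x = 0") (simp_all add: removed)
  qed
  also have "\<dots> = fact m * ((\<Sum>x\<in>Vs. real (\<eta> x)) * T - (\<Sum>x\<in>Vs. real (\<eta> x) * h (dlt x)))"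
    by (simp add: sum_distrib_left sum_distrib_right right_diff_distrib sum_subtractf mult_ac)
  also have "\<dots> = fact m * ((\<Sum>x\<in>Vs. real (\<eta> x)) * T - T)"
    by (simp add: T_def)
  also have "\<dots> = fact (Suc m) * T"
    using Suc.prems(2) by (simp flip: of_nat_sum add: algebra_simps)
  finally show ?case
    by (simp add: T_def)
qed

lemma phi_Cons: "phi (a # xs) u = (if a = u then 1 else 0) + phi xs u"
  by (simp add: phi_def)

lemma sum_phi:
  assumes "finite Vs" and "set xs \<subseteq> Vs"
  shows "(\<Sum>u\<in>Vs. real (phi xs u) * F u) = (\<Sum>j<length xs. F (xs ! j))"
  using assms(2)
proof (induction xs)
  case Nil
  then show ?case by (simp add: phi_def)
next
  case (Cons a xs)
  have "(\<Sum>u\<in>Vs. real (phi (a # xs) u) * F u)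
      = (\<Sum>u\<in>Vs. (if u = a then F a else 0) + real (phi xs u) * F u)"
    by (rule sum.cong) (auto simp: phi_Cons distrib_right)
  also have "\<dots> = F a + (\<Sum>j<length xs. F (xs ! j))"
    using Cons assms(1) by (simp add: sum.distrib)
  finally show ?case
    by (simp only: length_Cons sum.lessThan_Suc_shift nth_Cons_0 nth_Cons_Suc)
qed


section \<open>Consistent absorbing processes\<close>

locale consistent_process =
  fixes Vs V :: "'a set" and \<Lambda> :: "nat set"
    and c :: "'a cfg \<Rightarrow> 'a cfg \<Rightarrow> real" and r :: "'a \<Rightarrow> 'a \<Rightarrow> real"
  assumes fin: "finite Vs" and sub: "V \<subseteq> Vs"
    and Lam_down: "\<forall>k\<in>\<Lambda>. \<forall>m\<le>k. m \<in> \<Lambda>"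
    and c_nonneg: "\<forall>\<eta>\<in>ConfSpace V V \<Lambda>. \<forall>\<xi>. c \<eta> \<xi> \<ge> 0"
    and c_cons: "\<forall>\<eta>\<in>ConfSpace V V \<Lambda>. \<forall>\<xi>. c \<eta> \<xi> \<noteq> 0 \<longrightarrow>
                   \<xi> \<in> ConfSpace V V \<Lambda> \<and> (\<Sum>i\<in>V. \<xi> i) = (\<Sum>i\<in>V. \<eta> i)"
    and r_nonneg: "\<forall>i\<in>V. \<forall>j\<in>Vs - V. r i j \<ge> 0"
    and consistent: "\<forall>f \<eta>. \<eta> \<in> ConfSpace Vs V \<Lambda> \<longrightarrow>
                       genAbs Vs V \<Lambda> c r (Aop Vs f) \<eta> = Aop Vs (genAbs Vs V \<Lambda> c r f) \<eta>"
begin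

abbreviation "Conf \<equiv> ConfSpace Vs V \<Lambda>"
abbreviation "sec \<eta> \<equiv> sector Vs V \<Lambda> (\<Sum>i\<in>Vs. \<eta> i)"
abbreviation "Q S \<equiv> genMat Vs V c r S"

definition genPow :: "nat \<Rightarrow> ('a cfg \<Rightarrow> real) \<Rightarrow> 'a cfg \<Rightarrow> real" where
  "genPow k f \<eta> = (\<Sum>\<xi>\<in>sec \<eta>. mpow (sec \<eta>) (Q (sec \<eta>)) k \<eta> \<xi> * f \<xi>)"

lemma finite_sec: "finite (sector Vs V \<Lambda> k)"
  by (rule finite_sector[OF fin])

lemma in_own_sec: "\<eta> \<in> Conf \<Longrightarrow> \<eta> \<in> sec \<eta>"
  by (simp add: sector_def)

lemma sec_eq: "\<xi> \<in> sec \<eta> \<Longrightarrow> sec \<xi> = sec \<eta>"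
  by (simp add: sector_def)

lemma sec_subset_Conf: "\<xi> \<in> sec \<eta> \<Longrightarrow> \<xi> \<in> Conf"
  by (simp add: sector_def)

lemma remove_particle_in_Conf:
  assumes "\<eta> \<in> Conf" and "x \<in> Vs" and "0 < \<eta> x"
  shows "(\<lambda>k. \<eta> k - dlt x k) \<in> Conf"
  using assms Lam_down unfolding ConfSpace_def by auto

lemma dlt_in_Conf:
  assumes "\<eta> \<in> Conf" and "u \<in> Vs" and "u \<in> V \<Longrightarrow> 0 < \<eta> u"
  shows "dlt u \<in> Conf"
proof -
  have "dlt u i \<in> \<Lambda>" if "i \<in> V" for i
  proof -
    have "\<eta> i \<in> \<Lambda>" and "dlt u i \<le> \<eta> i"
      using assms that by (auto simp: ConfSpace_def dlt_def)
    then show ?thesis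
      using Lam_down by blast
  qed
  then show ?thesis
    using assms(2) by (auto simp: ConfSpace_def dlt_def)
qed

lemma rateAbs_nonneg:
  assumes "\<eta> \<in> Conf"
  shows "rateAbs Vs V c r \<eta> \<xi> \<ge> 0"
proof -
  have "restr V \<eta> \<in> ConfSpace V V \<Lambda>"
    using assms by (auto simp: restr_def ConfSpace_def)
  then have "rateL V c \<eta> \<xi> \<ge> 0"
    using c_nonneg by (simp add: rateL_def)
  moreover have "rateH Vs V r \<eta> \<xi> \<ge> 0"
    unfolding rateH_def using r_nonneg by (intro sum_nonneg) auto
  ultimately show ?thesis
    by (simp add: rateAbs_def)
qed

lemma genAbs_eq_genMat:
  assumes "\<eta> \<in> Conf"
  shows "genAbs Vs V \<Lambda> c r h \<eta> = (\<Sum>\<xi>\<in>sec \<eta>. Q (sec \<eta>) \<eta> \<xi> * h \<xi>)"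
proof -
  let ?S = "sec \<eta>"
  have \<eta>: "\<eta> \<in> ?S"
    using in_own_sec[OF assms] .
  have "(\<Sum>\<xi>\<in>?S - {\<eta>}. Q ?S \<eta> \<xi> * h \<xi>) = (\<Sum>\<xi>\<in>?S - {\<eta>}. rateAbs Vs V c r \<eta> \<xi> * h \<xi>)"
    by (rule sum.cong) (auto simp: genMat_def)
  then have "(\<Sum>\<xi>\<in>?S. Q ?S \<eta> \<xi> * h \<xi>)
      = Q ?S \<eta> \<eta> * h \<eta> + (\<Sum>\<xi>\<in>?S - {\<eta>}. rateAbs Vs V c r \<eta> \<xi> * h \<xi>)"
    using \<eta> finite_sec by (simp add: sum.remove)
  also have "\<dots> = (\<Sum>\<xi>\<in>?S - {\<eta>}. rateAbs Vs V c r \<eta> \<xi> * (h \<xi> - h \<eta>))"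
    by (simp add: genMat_def sum_distrib_right right_diff_distrib sum_subtractf)
  also have "\<dots> = genAbs Vs V \<Lambda> c r h \<eta>"
    unfolding genAbs_def using \<eta> finite_sec by (simp add: sum.remove)
  finally show ?thesis ..
qed

lemma genAbs_cong:
  assumes "\<eta> \<in> Conf" and "\<And>\<xi>. \<xi> \<in> sec \<eta> \<Longrightarrow> h \<xi> = h' \<xi>"
  shows "genAbs Vs V \<Lambda> c r h \<eta> = genAbs Vs V \<Lambda> c r h' \<eta>"
  using assms in_own_sec[OF assms(1)] unfolding genAbs_def by (intro sum.cong) auto

lemma genPow_0:
  assumes "\<eta> \<in> Conf"
  shows "genPow 0 f \<eta> = f \<eta>"
proof -
  have "genPow 0 f \<eta> = (\<Sum>\<xi>\<in>sec \<eta>. if \<xi> = \<eta> then f \<eta> else 0)"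
    unfolding genPow_def by (rule sum.cong) auto
  then show ?thesis
    using in_own_sec[OF assms] finite_sec by simp
qed

lemma genPow_Suc:
  assumes "\<eta> \<in> Conf"
  shows "genPow (Suc k) f \<eta> = genAbs Vs V \<Lambda> c r (genPow k f) \<eta>"
proof -
  let ?S = "sec \<eta>"
  have "genPow (Suc k) f \<eta> = (\<Sum>\<xi>\<in>?S. (\<Sum>z\<in>?S. Q ?S \<eta> z * mpow ?S (Q ?S) k z \<xi>) * f \<xi>)"
    by (simp add: genPow_def)
  also have "\<dots> = (\<Sum>z\<in>?S. Q ?S \<eta> z * (\<Sum>\<xi>\<in>?S. mpow ?S (Q ?S) k z \<xi> * f \<xi>))"
    unfolding sum_distrib_right sum_distrib_left mult.assoc by (rule sum.swap)
  also have "\<dots> = (\<Sum>z\<in>?S. Q ?S \<eta> z * genPow k f z)"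
    by (intro sum.cong refl) (simp add: genPow_def sec_eq)
  also have "\<dots> = genAbs Vs V \<Lambda> c r (genPow k f) \<eta>"
    by (rule genAbs_eq_genMat[OF assms, symmetric])
  finally show ?thesis .
qed

lemma genPow_Aop:
  assumes "\<eta> \<in> Conf"
  shows "genPow k (Aop Vs f) \<eta> = Aop Vs (genPow k f) \<eta>"
  using assms
proof (induction k arbitrary: \<eta>)
  case 0
  then show ?case
    by (simp add: genPow_0) (rule Aop_cong, simp add: genPow_0 remove_particle_in_Conf)
next
  case (Suc k)
  have "genPow (Suc k) (Aop Vs f) \<eta> = genAbs Vs V \<Lambda> c r (genPow k (Aop Vs f)) \<eta>"
    by (rule genPow_Suc[OF Suc.prems])
  also have "\<dots> = genAbs Vs V \<Lambda> c r (Aop Vs (genPow k f)) \<eta>"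
    by (rule genAbs_cong[OF Suc.prems]) (rule Suc.IH[OF sec_subset_Conf])
  also have "\<dots> = Aop Vs (genAbs Vs V \<Lambda> c r (genPow k f)) \<eta>"
    using consistent Suc.prems by blast
  also have "\<dots> = Aop Vs (genPow (Suc k) f) \<eta>"
    by (rule Aop_cong) (simp add: genPow_Suc remove_particle_in_Conf Suc.prems)
  finally show ?case .
qed

lemma expect_series:
  assumes "\<eta> \<in> Conf"
  shows "(\<lambda>k. t ^ k / fact k * genPow k f \<eta>) sums expect Vs V \<Lambda> c r t \<eta> f"
proof -
  let ?S = "sec \<eta>"
  have summable: "summable (\<lambda>k. t ^ k / fact k * mpow ?S (Q ?S) k \<eta> \<xi> * f \<xi>)" for \<xi>
    by (intro summable_mult2 summable_expM_series finite_sec in_own_sec assms)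
  have "(\<lambda>k. \<Sum>\<xi>\<in>?S. t ^ k / fact k * mpow ?S (Q ?S) k \<eta> \<xi> * f \<xi>)
      sums (\<Sum>\<xi>\<in>?S. expM ?S (Q ?S) t \<eta> \<xi> * f \<xi>)"
    unfolding expM_def by (intro sums_sum sums_mult2 summable_sums summable_expM_series
        finite_sec in_own_sec assms)
  then show ?thesis
    by (simp add: expect_def Defs.trans_def genPow_def sum_distrib_left mult.assoc)
qed

lemma expect_Aop:
  assumes "\<eta> \<in> Conf"
  shows "expect Vs V \<Lambda> c r t \<eta> (Aop Vs f) = Aop Vs (\<lambda>\<zeta>. expect Vs V \<Lambda> c r t \<zeta> f) \<eta>"
proof -
  have "(\<lambda>k. t ^ k / fact k * genPow k (Aop Vs f) \<eta>)
      sums Aop Vs (\<lambda>\<zeta>. expect Vs V \<Lambda> c r t \<zeta> f) \<eta>"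
  proof -
    have "(\<lambda>k. real (\<eta> x) * (t ^ k / fact k * genPow k f (\<lambda>i. \<eta> i - dlt x i)))
        sums (real (\<eta> x) * expect Vs V \<Lambda> c r t (\<lambda>i. \<eta> i - dlt x i) f)" if "x \<in> Vs" for x
    proof (cases "\<eta> x = 0")
      case False
      then show ?thesis
        using sums_mult[OF expect_series[OF remove_particle_in_Conf[OF assms that]]] by simp
    qed simp
    then have "(\<lambda>k. Aop Vs (genPow k f) \<eta> * (t ^ k / fact k))
        sums Aop Vs (\<lambda>\<zeta>. expect Vs V \<Lambda> c r t \<zeta> f) \<eta>"
      unfolding Aop_def sum_distrib_right by (intro sums_sum) (simp add: mult_ac)
    then show ?thesis
      by (simp add: genPow_Aop[OF assms] mult.commute)
  qed
  then show ?thesis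
    using expect_series[OF assms] sums_unique2 by blast
qed

lemma expect_Aop_pow:
  assumes "\<eta> \<in> Conf"
  shows "expect Vs V \<Lambda> c r t \<eta> ((Aop Vs ^^ m) g)
       = (Aop Vs ^^ m) (\<lambda>\<zeta>. expect Vs V \<Lambda> c r t \<zeta> g) \<eta>"
  using assms
proof (induction m arbitrary: \<eta>)
  case 0
  then show ?case by simp
next
  case (Suc m)
  have "expect Vs V \<Lambda> c r t \<eta> ((Aop Vs ^^ Suc m) g)
      = Aop Vs (\<lambda>\<zeta>. expect Vs V \<Lambda> c r t \<zeta> ((Aop Vs ^^ m) g)) \<eta>"
    by (simp add: expect_Aop[OF Suc.prems])
  also have "\<dots> = Aop Vs ((Aop Vs ^^ m) (\<lambda>\<zeta>. expect Vs V \<Lambda> c r t \<zeta> g)) \<eta>"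
    by (rule Aop_cong) (simp add: Suc.IH remove_particle_in_Conf Suc.prems)
  finally show ?case by simp
qed


lemma rateAbs_absorbed_particle:
  assumes "v \<in> Vs - V" and "dlt v \<in> Conf" and "\<zeta> \<noteq> dlt v"
  shows "rateAbs Vs V c r (dlt v) \<zeta> = 0"
proof -
  have "rateH Vs V r (dlt v) \<zeta> = 0"
    unfolding rateH_def using assms(1) by (intro sum.neutral ballI) (auto simp: dlt_def)
  moreover have "rateL V c (dlt v) \<zeta> = 0"
  proof (rule ccontr)
    assume nonzero: "rateL V c (dlt v) \<zeta> \<noteq> 0"
    then have outside: "\<forall>i. i \<notin> V \<longrightarrow> \<zeta> i = dlt v i"
      by (auto simp: rateL_def split: if_splits)
    have empty: "restr V (dlt v) = (\<lambda>i. 0)"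
      using assms(1) by (auto simp: restr_def dlt_def)
    moreover have "\<forall>i\<in>V. dlt v i = 0"
      using assms(1) by (auto simp: dlt_def)
    then have "(\<lambda>i. 0) \<in> ConfSpace V V \<Lambda>"
      using assms(2) by (simp add: ConfSpace_def)
    ultimately have "(\<Sum>i\<in>V. restr V \<zeta> i) = 0"
      using c_cons nonzero outside by (force simp: rateL_def)
    then have "\<forall>i\<in>V. \<zeta> i = 0"
      using fin sub by (simp add: restr_def finite_subset)
    then have "\<zeta> = dlt v"
      using outside assms(1) by (auto simp: dlt_def fun_eq_iff)
    with assms(3) show False ..
  qed
  ultimately show ?thesis
    by (simp add: rateAbs_def)
qed

lemma rwProb_convergent:
  assumes "v \<in> Vs - V" and "dlt v \<in> Conf" and "u \<in> Vs" and "dlt u \<in> Conf"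
  shows "\<exists>L. ((\<lambda>t. rwProb Vs V \<Lambda> c r t u v) \<longlongrightarrow> L) at_top"
proof -
  let ?S = "sector Vs V \<Lambda> 1"
  have "sec (dlt u) = ?S" and "sec (dlt v) = ?S"
    using sum_dlt[OF fin] assms by auto
  then have u: "dlt u \<in> ?S" and v: "dlt v \<in> ?S"
    using in_own_sec assms(2,4) by metis+
  have "rwProb Vs V \<Lambda> c r t u v = expM ?S (Q ?S) t (dlt u) (dlt v)" for t
    by (simp add: rwProb_def Defs.trans_def Let_def \<open>sec (dlt u) = ?S\<close>)
  moreover have "\<forall>a\<in>?S. \<forall>b\<in>?S. a \<noteq> b \<longrightarrow> Q ?S a b \<ge> 0"
    by (auto simp: genMat_def sector_def intro!: rateAbs_nonneg)
  moreover have "\<forall>a\<in>?S. (\<Sum>b\<in>?S. Q ?S a b) = 0"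
    using genMat_row_sum[OF finite_sec] by blast
  moreover have "\<forall>b\<in>?S. Q ?S (dlt v) b = 0"
    using rateAbs_absorbed_particle[OF assms(1,2)] by (auto simp: genMat_def)
  ultimately show ?thesis
    using expM_absorbing_convergent[OF finite_sec u v] by simp
qed

lemma expect_dlt_indicator:
  assumes "u \<in> Vs" and "dlt v \<in> Conf" and "v \<in> Vs"
  shows "expect Vs V \<Lambda> c r t (dlt u) (\<lambda>\<zeta>. if \<zeta> = dlt v then 1 else 0) = rwProb Vs V \<Lambda> c r t u v"
proof -
  have "dlt v \<in> sec (dlt u)"
    using assms sum_dlt[OF fin] in_own_sec by metis
  then show ?thesis
    unfolding expect_def rwProb_def using finite_sec by (simp add: if_distrib cong: if_cong)
qed

lemma expect_count_eq_sum_rwProb: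
  assumes "\<eta> \<in> Conf" and "v \<in> Vs" and "dlt v \<in> Conf"
  shows "expect Vs V \<Lambda> c r t \<eta> (\<lambda>\<xi>. real (\<xi> v)) = (\<Sum>u\<in>Vs. real (\<eta> u) * rwProb Vs V \<Lambda> c r t u v)"
proof (cases "\<Sum>i\<in>Vs. \<eta> i")
  case 0
  have "expect Vs V \<Lambda> c r t \<eta> (\<lambda>\<xi>. real (\<xi> v)) = 0"
    unfolding expect_def using 0 fin assms(2) by (intro sum.neutral ballI) (simp add: sector_def)
  moreover have "(\<Sum>u\<in>Vs. real (\<eta> u) * rwProb Vs V \<Lambda> c r t u v) = 0"
    using 0 fin by (intro sum.neutral ballI) simp
  ultimately show ?thesis
    by simp
next
  case (Suc m)
  define g where "g = (\<lambda>\<zeta>. if \<zeta> = dlt v then 1 else (0::real))"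
  have Aop_pow: "(Aop Vs ^^ m) h \<xi> = fact m * (\<Sum>u\<in>Vs. real (\<xi> u) * h (dlt u))"
    if "\<xi> \<in> sec \<eta>" for \<xi> h
    using Aop_pow_eq[OF fin] that Suc by (simp add: sector_def ConfSpace_def)
  have count: "real (\<xi> v) = (\<Sum>u\<in>Vs. real (\<xi> u) * g (dlt u))" for \<xi> :: "'a cfg"
    using fin assms(2) by (simp add: g_def dlt_eq_iff if_distrib cong: if_cong)
  have "expect Vs V \<Lambda> c r t \<eta> (\<lambda>\<xi>. real (\<xi> v))
      = expect Vs V \<Lambda> c r t \<eta> ((Aop Vs ^^ m) g) / fact m"
    unfolding expect_def sum_divide_distrib by (intro sum.cong refl) (simp add: Aop_pow count)
  also have "\<dots> = (Aop Vs ^^ m) (\<lambda>\<zeta>. expect Vs V \<Lambda> c r t \<zeta> g) \<eta> / fact m"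
    by (simp add: expect_Aop_pow[OF assms(1)])
  also have "\<dots> = (\<Sum>u\<in>Vs. real (\<eta> u) * expect Vs V \<Lambda> c r t (dlt u) g)"
    using Aop_pow[OF in_own_sec[OF assms(1)]] by simp
  also have "\<dots> = (\<Sum>u\<in>Vs. real (\<eta> u) * rwProb Vs V \<Lambda> c r t u v)"
    unfolding g_def using assms(2,3) by (intro sum.cong refl) (simp add: expect_dlt_indicator)
  finally show ?thesis .
qed

end

theorem corollary5p6:
  fixes Vs V :: "'a set" and \<Lambda> :: "nat set"
    and c :: "'a cfg \<Rightarrow> 'a cfg \<Rightarrow> real" and r :: "'a \<Rightarrow> 'a \<Rightarrow> real"
    and xs :: "'a list" and v :: 'a
  assumes fin: "finite Vs" and sub: "V \<subseteq> Vs"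
    and Lam_down: "\<forall>k\<in>\<Lambda>. \<forall>m\<le>k. m \<in> \<Lambda>"
    and c_nonneg: "\<forall>\<eta>\<in>ConfSpace V V \<Lambda>. \<forall>\<xi>. c \<eta> \<xi> \<ge> 0"
    and c_cons: "\<forall>\<eta>\<in>ConfSpace V V \<Lambda>. \<forall>\<xi>. c \<eta> \<xi> \<noteq> 0 \<longrightarrow>
                   \<xi> \<in> ConfSpace V V \<Lambda> \<and> (\<Sum>i\<in>V. \<xi> i) = (\<Sum>i\<in>V. \<eta> i)"
    and r_nonneg: "\<forall>i\<in>V. \<forall>j\<in>Vs - V. r i j \<ge> 0"
    and consistent: "\<forall>f \<eta>. \<eta> \<in> ConfSpace Vs V \<Lambda> \<longrightarrow>
                       genAbs Vs V \<Lambda> c r (Aop Vs f) \<eta> = Aop Vs (genAbs Vs V \<Lambda> c r f) \<eta>"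
    and xs_in: "set xs \<subseteq> Vs" and phi_in: "phi xs \<in> ConfSpace Vs V \<Lambda>"
    and v_abs: "v \<in> Vs - V"
  shows "\<exists>p :: nat \<Rightarrow> real.
           (\<forall>j<length xs. ((\<lambda>t. rwProb Vs V \<Lambda> c r t (xs ! j) v) \<longlongrightarrow> p j) at_top) \<and>
           ((\<lambda>t. expect Vs V \<Lambda> c r t (phi xs) (\<lambda>\<xi>. real (\<xi> v)))
              \<longlongrightarrow> (\<Sum>j<length xs. p j)) at_top"
proof -
  interpret consistent_process Vs V \<Lambda> c r
    using fin sub Lam_down c_nonneg c_cons r_nonneg consistent by unfold_locales
  have dlt_v: "dlt v \<in> Conf"
    using dlt_in_Conf[OF phi_in] v_abs by blast
  have "dlt (xs ! j) \<in> Conf" if "j < length xs" for j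
    using dlt_in_Conf[OF phi_in] xs_in nth_mem[OF that] by (auto simp: phi_def filter_empty_conv)
  then have "\<forall>j\<in>{..<length xs}. \<exists>L. ((\<lambda>t. rwProb Vs V \<Lambda> c r t (xs ! j) v) \<longlongrightarrow> L) at_top"
    using rwProb_convergent[OF v_abs dlt_v] xs_in nth_mem by blast
  then obtain p where p: "\<forall>j\<in>{..<length xs}. ((\<lambda>t. rwProb Vs V \<Lambda> c r t (xs ! j) v) \<longlongrightarrow> p j) at_top"
    by (metis bchoice)
  have "expect Vs V \<Lambda> c r t (phi xs) (\<lambda>\<xi>. real (\<xi> v)) = (\<Sum>j<length xs. rwProb Vs V \<Lambda> c r t (xs ! j) v)"
    for t
    using expect_count_eq_sum_rwProb[OF phi_in _ dlt_v] sum_phi[OF fin xs_in] v_abs by simp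
  moreover have "((\<lambda>t. \<Sum>j<length xs. rwProb Vs V \<Lambda> c r t (xs ! j) v) \<longlongrightarrow> (\<Sum>j<length xs. p j)) at_top"
    using p by (intro tendsto_sum) auto
  ultimately show ?thesis
    using p by auto
qed

end
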